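(* A term $t\in\mathtt T_J$ is a $\to_{wh}$-normal form if and only if $t\in\mathtt n\cup\mathtt a$, where $\mathtt n ::= x \mid \mathtt n(u,y.\mathtt n)$ (neutral terms) and $\mathtt a ::= \lambda x.t \mid \mathtt n(u,y.\mathtt a)$ (answers), with $u,t$ arbitrary terms.
   Context: Terms $\mathtt T_J$: $t,u,r ::= x \mid \lambda x.t \mid t(u,y.r)$ ($y$ bound in $r$), up to $\alpha$-equivalence; $\{u/x\}t$ is capture-avoiding substitution. Neutral list contexts $\mathtt D_n ::= \Diamond \mid \mathtt n(u,y.\mathtt D_n)$; weak-head contexts $\mathtt W ::= \Diamond \mid \mathtt W(u,y.r) \mid \mathtt n(u,y.\mathtt W)$. Weak-head reduction: $\mathtt W\langle \mathtt D_n\langle\lambda x.s\rangle(u,y.r)\rangle \to_{wh} \mathtt W\langle \{\{u/x\}\mathtt D_n\langle s\rangle/y\}r\rangle$ (variables bound by $\mathtt D_n$ not free in $u$, $x$ not occurring in $\mathtt D_n$). A $\to_{wh}$-normal form is a term with no $\to_{wh}$-reduct. *)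

theory Defs
  imports Main
begin

text \<open>Terms of the lambda-calculus with generalised application, in de Bruijn
  representation (so terms are automatically taken up to alpha-equivalence).
  \<open>App t u r\<close> stands for t(u,y.r); the variable y is bound in r and is
  de Bruijn index 0 in r.\<close>

datatype trm = Var nat | Lam trm | App trm trm trm

fun lift :: "nat \<Rightarrow> trm \<Rightarrow> trm" where
  "lift k (Var i) = (if i < k then Var i else Var (Suc i))"
| "lift k (Lam t) = Lam (lift (Suc k) t)"
| "lift k (App t u r) = App (lift k t) (lift k u) (lift (Suc k) r)"

fun liftn :: "nat \<Rightarrow> trm \<Rightarrow> trm" where
  "liftn 0 t = t"
| "liftn (Suc n) t = lift 0 (liftn n t)"

text \<open>subst t j u = {u/j}t : capture-avoiding substitution of u for index j,
  decrementing the indices above j (the binder of j disappears).\<close>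
fun subst :: "trm \<Rightarrow> nat \<Rightarrow> trm \<Rightarrow> trm" where
  "subst (Var i) j u = (if i < j then Var i else if i = j then u else Var (i - 1))"
| "subst (Lam t) j u = Lam (subst t (Suc j) (lift 0 u))"
| "subst (App t v r) j u = App (subst t j u) (subst v j u) (subst r (Suc j) (lift 0 u))"

inductive neutral :: "trm \<Rightarrow> bool" where
  "neutral (Var i)"
| "neutral n \<Longrightarrow> neutral n' \<Longrightarrow> neutral (App n u n')"

inductive answer :: "trm \<Rightarrow> bool" where
  "answer (Lam t)"
| "neutral n \<Longrightarrow> answer a \<Longrightarrow> answer (App n u a)"

datatype ctx = Hole | CHead ctx trm trm | CBody trm trm ctx

fun plug :: "ctx \<Rightarrow> trm \<Rightarrow> trm" where
  "plug Hole s = s"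
| "plug (CHead C u r) s = App (plug C s) u r"
| "plug (CBody t u C) s = App t u (plug C s)"

inductive is_Dn :: "ctx \<Rightarrow> bool" where
  "is_Dn Hole"
| "neutral n \<Longrightarrow> is_Dn D \<Longrightarrow> is_Dn (CBody n u D)"

inductive is_W :: "ctx \<Rightarrow> bool" where
  "is_W Hole"
| "is_W W \<Longrightarrow> is_W (CHead W u r)"
| "neutral n \<Longrightarrow> is_W W \<Longrightarrow> is_W (CBody n u W)"

fun binders :: "ctx \<Rightarrow> nat" where
  "binders Hole = 0"
| "binders (CHead C u r) = binders C"
| "binders (CBody t u C) = Suc (binders C)"

text \<open>Weak-head reduction
  W<D_n<\<lambda>x.s>(u,y.r)> \<rightarrow>wh W<{{u/x}D_n<s>/y}r>.
  In de Bruijn form, u must be shifted past the binders of D_n (this is the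
  side condition that the variables bound by D_n are not free in u), and x
  (index 0 of s) does not occur in D_n, so the substitution acts on s only.\<close>
definition wh_step :: "trm \<Rightarrow> trm \<Rightarrow> bool" where
  "wh_step t t' \<longleftrightarrow> (\<exists>W D s u r. is_W W \<and> is_Dn D \<and>
      t = plug W (App (plug D (Lam s)) u r) \<and>
      t' = plug W (subst r 0 (plug D (subst s 0 (liftn (binders D) u)))))"

definition wh_normal :: "trm \<Rightarrow> bool" where
  "wh_normal t \<longleftrightarrow> \<not> (\<exists>t'. wh_step t t')"

end

theory Submission
  imports Defs
begin

(* A redex D_n\<langle>\<lambda>x.s\<rangle>(u,y.r) has a non-neutral head, and neutral terms are
  neutral all along their head and body spines, so no weak-head context places a
  redex inside a neutral term or an answer. Conversely, by induction on t: if
  t(u,y.r) is normal then so is t, and t cannot be an answer D_n\<langle>\<lambda>x.s\<rangle>, since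
  then t(u,y.r) would itself be a redex; hence t is neutral, so n(u,y.\<Diamond>) is a
  weak-head context and r is normal as well. *)

lemma not_neutral_Lam: "\<not> neutral (Lam s)"
  by (auto elim: neutral.cases)

lemma neutral_plugD: "neutral (plug C t) \<Longrightarrow> neutral t"
  by (induction C) (auto elim: neutral.cases)

lemma not_neutral_plug_Lam: "\<not> neutral (plug C (Lam s))"
  using neutral_plugD not_neutral_Lam by blast

lemma answer_plug_W_App_neutral_head:
  assumes "is_W W" and "answer (plug W (App t u r))"
  shows "neutral t"
  using assms
proof (induction W rule: is_W.induct)
  case 1
  then show ?case by (auto elim: answer.cases)
next
  case (2 W u' r')
  then have "neutral (plug W (App t u r))" by (auto elim: answer.cases)
  then show ?case by (auto dest: neutral_plugD elim: neutral.cases)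
next
  case (3 n W u')
  then show ?case by (auto elim: answer.cases)
qed

lemma neutral_or_answer_imp_wh_normal:
  assumes "neutral t \<or> answer t"
  shows "wh_normal t"
  unfolding wh_normal_def wh_step_def
proof clarify
  fix W D s u r
  assume W: "is_W W" and t: "t = plug W (App (plug D (Lam s)) u r)"
  have "\<not> neutral t"
    using t neutral_plugD not_neutral_plug_Lam by (fastforce elim: neutral.cases)
  moreover have "\<not> answer t"
    using t answer_plug_W_App_neutral_head[OF W] not_neutral_plug_Lam by blast
  ultimately show False using assms by blast
qed

lemma answer_obtains_Dn_Lam:
  assumes "answer t"
  obtains D s where "is_Dn D" and "t = plug D (Lam s)"
  using assms
proof (induction arbitrary: thesis rule: answer.induct)
  case (1 s)
  then show ?case using is_Dn.intros(1) by fastforce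
next
  case (2 n a u)
  then show ?case using is_Dn.intros(2) by (metis plug.simps(3))
qed

lemma wh_step_root:
  "is_Dn D \<Longrightarrow>
    wh_step (App (plug D (Lam s)) u r) (subst r 0 (plug D (subst s 0 (liftn (binders D) u))))"
  unfolding wh_step_def using is_W.intros(1) by (metis plug.simps(1))

lemma wh_step_CHead: "wh_step t t' \<Longrightarrow> wh_step (App t u r) (App t' u r)"
  unfolding wh_step_def by (metis is_W.intros(2) plug.simps(2))

lemma wh_step_CBody: "neutral n \<Longrightarrow> wh_step r r' \<Longrightarrow> wh_step (App n u r) (App n u r')"
  unfolding wh_step_def by (metis is_W.intros(3) plug.simps(3))

lemma wh_normal_imp_neutral_or_answer: "wh_normal t \<Longrightarrow> neutral t \<or> answer t"
proof (induction t)
  case (Var i)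
  then show ?case by (simp add: neutral.intros)
next
  case (Lam s)
  then show ?case by (simp add: answer.intros)
next
  case (App t u r)
  have "wh_normal t"
    using App.prems wh_step_CHead unfolding wh_normal_def by blast
  moreover have "\<not> answer t"
  proof
    assume "answer t"
    then obtain D s where "is_Dn D" and "t = plug D (Lam s)"
      by (rule answer_obtains_Dn_Lam)
    then show False
      using App.prems wh_step_root unfolding wh_normal_def by blast
  qed
  ultimately have t: "neutral t" using App.IH(1) by blast
  then have "wh_normal r"
    using App.prems wh_step_CBody unfolding wh_normal_def by blast
  then show ?case using t App.IH(3) by (auto intro: neutral.intros answer.intros)
qed

theorem mainTheorem5:
  shows "wh_normal t \<longleftrightarrow> neutral t \<or> answer t"
  using wh_normal_imp_neutral_or_answer neutral_or_answer_imp_wh_normal by blast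

end
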